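(* Let $\alpha>1/3$, $\beta>0$, and let $\widetilde X=\mathcal{M}(\xi)$ with $\xi=(\xi^\pm_k(y))$ independent exponential random variables, $\xi^\pm_k(y)$ of mean $f^\pm(y,k)$. Then for every $y\in\mathbb{Z}$, almost surely, $$\Big\{\sum_{k=0}^{+\infty}e^{2\beta[\widetilde l_{\tau_k}(y)-\alpha\widetilde l_{\tau_k}(y-1)]}<\infty\Big\}\subset\{T_y^-<\infty\}.$$
   Context: Weights: for $y\in\mathbb{Z}$, $n\in\{0,1,2,\dots\}$, $f^\pm(y,n):=\exp\big(2\beta[2(1+\alpha)n-\alpha\mathbf{1}_{\{y\pm1=0\}}+(1+\alpha)\mathbf{1}_{\{\pm y<0\}}]\big)$ and $w(n):=\exp(4\beta\alpha n)$. Time-line construction $\mathcal{M}$: given positive reals $\xi=(\xi^\pm_k(y))_{y\in\mathbb{Z},k\ge0}$, $\widetilde X=\mathcal{M}(\xi)$ is the piecewise-constant right-continuous nearest-neighbour process on $\mathbb{Z}$ with $\widetilde X_0=0$ built as follows. For $t\ge0$ let $\widetilde N_t(y,y\pm1)$ be the number of jumps of $\widetilde X$ from $y$ to $y\pm1$ during $[0,t]$ and $\widetilde Z_t(z)$ the number of jump times $s\le t$ with $\widetilde X_s=z$. While the walker sits at $y$, for each $\epsilon\in\{-1,+1\}$ a clock is attached to the oriented edge $(y,y+\epsilon)$: it measures the total time spent at $y$ since the last time the pair $(\widetilde N_t(y,y+\epsilon),\widetilde Z_t(y+\epsilon))$ changed (or since time $0$), and it rings when this time reaches $\xi^\epsilon_{\widetilde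 N_t(y,y+\epsilon)}(y)/w(\widetilde Z_t(y+\epsilon))$. When one of the two clocks at the current site rings, the walker jumps across the corresponding edge; if both ring simultaneously the walker stays at $y$ forever. Let $\tau_0:=0$ and $\tau_k$ be the time of the $k$-th jump (with $\tau_k=\infty$ if fewer jumps occur). $\widetilde l_t(j)$ denotes the number of crossings of the non-oriented edge $\{j-1,j\}$ by $\widetilde X$ during $[0,t]$. For $y\in\mathbb{Z}$, $T_y^-:=\sum_{k\ge0}\mathbf{1}_{\{\widetilde X_{\tau_k}=y,\ \widetilde X_{\tau_{k+1}}=y-1\}}\dfrac{\xi^-_{\widetilde N_{\tau_k}(y,y-1)}(y)}{w(\widetilde Z_{\tau_k}(y-1))}$. *)

theory Defs
  imports "HOL-Probability.Probability"
begin

definition sg :: "bool \<Rightarrow> int" where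
  "sg b = (if b then 1 else -1)"

definition fw :: "real \<Rightarrow> real \<Rightarrow> bool \<Rightarrow> int \<Rightarrow> nat \<Rightarrow> real" where
  "fw \<alpha> \<beta> b y n = exp (2 * \<beta> * (2 * (1 + \<alpha>) * real n
      - \<alpha> * (if y + sg b = 0 then 1 else 0)
      + (1 + \<alpha>) * (if sg b * y < 0 then 1 else 0)))"

definition ww :: "real \<Rightarrow> real \<Rightarrow> nat \<Rightarrow> real" where
  "ww \<alpha> \<beta> n = exp (4 * \<beta> * \<alpha> * real n)"

text \<open>State of the time-line construction right after a jump time tau_k:
  current position, oriented edge crossing numbers N x z (jumps from x to z),
  arrival counts Z, clocks C x e (time spent at x since the last change of
  the pair (N(x,x+e), Z(x+e))), the jump time, and whether the walker is
  stuck forever (both clocks rang simultaneously).\<close>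
record jstate =
  pos :: int
  Ncr :: "int \<Rightarrow> int \<Rightarrow> nat"
  Zar :: "int \<Rightarrow> nat"
  clk :: "int \<Rightarrow> bool \<Rightarrow> real"
  jtime :: ereal
  stuck :: bool

definition init_state :: jstate where
  "init_state = \<lparr>pos = 0, Ncr = (\<lambda>_ _. 0), Zar = (\<lambda>_. 0), clk = (\<lambda>_ _. 0),
                  jtime = 0, stuck = False\<rparr>"

definition thr :: "(bool \<Rightarrow> nat \<Rightarrow> int \<Rightarrow> real) \<Rightarrow> (nat \<Rightarrow> real) \<Rightarrow> jstate \<Rightarrow> bool \<Rightarrow> real" where
  "thr \<xi> w s e = \<xi> e (Ncr s (pos s) (pos s + sg e)) (pos s) / w (Zar s (pos s + sg e))"

definition remt :: "(bool \<Rightarrow> nat \<Rightarrow> int \<Rightarrow> real) \<Rightarrow> (nat \<Rightarrow> real) \<Rightarrow> jstate \<Rightarrow> bool \<Rightarrow> real" where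
  "remt \<xi> w s e = thr \<xi> w s e - clk s (pos s) e"

text \<open>One step of the jump chain: from the state at tau_k to the state at tau_(k+1).
  If both clocks ring simultaneously, the walker stays forever (tau_(k+1) = infinity,
  position and counts unchanged).\<close>
definition step :: "(bool \<Rightarrow> nat \<Rightarrow> int \<Rightarrow> real) \<Rightarrow> (nat \<Rightarrow> real) \<Rightarrow> jstate \<Rightarrow> jstate" where
  "step \<xi> w s =
    (if stuck s then s
     else if remt \<xi> w s True = remt \<xi> w s False then s\<lparr>jtime := \<infinity>, stuck := True\<rparr>
     else (let y = pos s; e = (remt \<xi> w s True < remt \<xi> w s False);
               dt = min (remt \<xi> w s True) (remt \<xi> w s False); y' = y + sg e in
       \<lparr>pos = y',
        Ncr = (Ncr s)(y := (Ncr s y)(y' := Ncr s y y' + 1)),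
        Zar = (Zar s)(y' := Zar s y' + 1),
        clk = (\<lambda>x d. if x + sg d = y' then 0
                      else if x = y then clk s x d + dt else clk s x d),
        jtime = jtime s + ereal dt,
        stuck = False\<rparr>))"

text \<open>State of the process Xtilde = M(xi) at the k-th jump time tau_k.\<close>
definition jchain :: "(bool \<Rightarrow> nat \<Rightarrow> int \<Rightarrow> real) \<Rightarrow> (nat \<Rightarrow> real) \<Rightarrow> nat \<Rightarrow> jstate" where
  "jchain \<xi> w k = (step \<xi> w ^^ k) init_state"

definition ltime :: "jstate \<Rightarrow> int \<Rightarrow> nat" where
  "ltime s j = Ncr s (j - 1) j + Ncr s j (j - 1)"

definition Tminus :: "(bool \<Rightarrow> nat \<Rightarrow> int \<Rightarrow> real) \<Rightarrow> (nat \<Rightarrow> real) \<Rightarrow> int \<Rightarrow> ennreal" where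
  "Tminus \<xi> w y = (\<Sum>k. (if pos (jchain \<xi> w k) = y \<and> pos (jchain \<xi> w (Suc k)) = y - 1
       then ennreal (\<xi> False (Ncr (jchain \<xi> w k) y (y - 1)) y / w (Zar (jchain \<xi> w k) (y - 1)))
       else 0))"

end

theory Submission
  imports Defs
begin

text \<open>Let K_n be the first jump time at which the walker sits at y having already jumped n times
  from y to y - 1.  Until the next such jump the walker stays in [y, +oo), so the number of arrivals
  at y - 1 is frozen and the n-th term of T_y^- is xi^-_n(y) / w(Z_{K_n}(y - 1)).  Balance of
  crossings shows that f^-(y, n) / w(Z_{K_n}(y - 1)) is exactly the K_n-th summand of the series in
  the statement.

  Fix a budget m and let G_n be that weight, set to 0 unless the partial series up to K_n is at
  most m.  Then the G_n sum to at most m, and G_n is a function of the clocks other than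
  xi^-_{n'}(y), n' >= n, hence independent of xi^-_n(y).  Therefore
  E[sum_n xi^-_n(y) G_n / f^-(y, n)] = E[sum_n G_n] <= m, and on the event that the series is at
  most m this majorant dominates T_y^-.\<close>

section \<open>Combinatorics of the jump chain\<close>

type_synonym clocks = "bool \<Rightarrow> nat \<Rightarrow> int \<Rightarrow> real"

lemma jchain_0 [simp]: "jchain \<Xi> w 0 = init_state"
  by (simp add: jchain_def)

lemma jchain_Suc: "jchain \<Xi> w (Suc k) = step \<Xi> w (jchain \<Xi> w k)"
  by (simp add: jchain_def)

lemma sg_simps [simp]: "sg True = 1" "sg False = -1"
  by (simp_all add: sg_def)

lemma step_cases:
  obtains (stay) "pos (step \<Xi> w s) = pos s" "Ncr (step \<Xi> w s) = Ncr s" "Zar (step \<Xi> w s) = Zar s"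
  | (jump) e where "pos (step \<Xi> w s) = pos s + sg e"
      "Ncr (step \<Xi> w s) = (Ncr s)(pos s := (Ncr s (pos s))(pos s + sg e := Ncr s (pos s) (pos s + sg e) + 1))"
      "Zar (step \<Xi> w s) = (Zar s)(pos s + sg e := Zar s (pos s + sg e) + 1)"
proof (cases "stuck s \<or> remt \<Xi> w s True = remt \<Xi> w s False")
  case True
  then show ?thesis using stay by (auto simp: step_def)
next
  case False
  then show ?thesis using jump[of "remt \<Xi> w s True < remt \<Xi> w s False"] by (simp add: step_def Let_def)
qed

lemma step_cong:
  assumes "\<And>e. \<Xi> e (Ncr s (pos s) (pos s + sg e)) (pos s) = \<Xi>' e (Ncr s (pos s) (pos s + sg e)) (pos s)"
  shows "step \<Xi> w s = step \<Xi>' w s"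
proof -
  have "remt \<Xi> w s e = remt \<Xi>' w s e" for e
    using assms[of e] by (simp add: remt_def thr_def)
  then show ?thesis by (simp add: step_def)
qed

context
  fixes \<Xi> :: clocks and w :: "nat \<Rightarrow> real"
begin

lemma jchain_Ncr_Suc_mono: "Ncr (jchain \<Xi> w k) a b \<le> Ncr (jchain \<Xi> w (Suc k)) a b"
  by (cases rule: step_cases[of \<Xi> w "jchain \<Xi> w k"]) (auto simp: jchain_Suc)

lemma jchain_Ncr_mono: "k \<le> k' \<Longrightarrow> Ncr (jchain \<Xi> w k) a b \<le> Ncr (jchain \<Xi> w k') a b"
  by (induction k' rule: dec_induct) (auto intro: le_trans jchain_Ncr_Suc_mono)

lemma jchain_Ncr_SucD:
  assumes "Ncr (jchain \<Xi> w (Suc k)) a b \<noteq> Ncr (jchain \<Xi> w k) a b"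
  shows "pos (jchain \<Xi> w k) = a" and "pos (jchain \<Xi> w (Suc k)) = b"
    and "Ncr (jchain \<Xi> w (Suc k)) a b = Ncr (jchain \<Xi> w k) a b + 1"
  using assms by (cases rule: step_cases[of \<Xi> w "jchain \<Xi> w k"]; auto simp: jchain_Suc split: if_splits)+

lemma jchain_Zar_SucD:
  "Zar (jchain \<Xi> w (Suc k)) a \<noteq> Zar (jchain \<Xi> w k) a \<Longrightarrow> pos (jchain \<Xi> w (Suc k)) = a"
  by (cases rule: step_cases[of \<Xi> w "jchain \<Xi> w k"]) (auto simp: jchain_Suc split: if_splits)

lemma jchain_pos_Suc_dist: "\<bar>pos (jchain \<Xi> w (Suc k)) - pos (jchain \<Xi> w k)\<bar> \<le> 1"
  by (cases rule: step_cases[of \<Xi> w "jchain \<Xi> w k"]) (auto simp: jchain_Suc sg_def)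

lemma jchain_Ncr_down_jump:
  assumes "pos (jchain \<Xi> w k) = y" "pos (jchain \<Xi> w (Suc k)) = y - 1"
  shows "Ncr (jchain \<Xi> w (Suc k)) y (y - 1) = Ncr (jchain \<Xi> w k) y (y - 1) + 1"
proof (cases rule: step_cases[of \<Xi> w "jchain \<Xi> w k"])
  case (jump e)
  with assms show ?thesis by (cases e) (auto simp: jchain_Suc)
qed (use assms in \<open>simp add: jchain_Suc\<close>)

lemma jchain_Zar_eq: "Zar (jchain \<Xi> w k) x = Ncr (jchain \<Xi> w k) (x - 1) x + Ncr (jchain \<Xi> w k) (x + 1) x"
proof (induction k arbitrary: x)
  case 0
  then show ?case by (simp add: init_state_def)
next
  case (Suc k)
  show ?case
  proof (cases rule: step_cases[of \<Xi> w "jchain \<Xi> w k"])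
    case (jump e)
    then show ?thesis using Suc.IH[of x] by (cases e) (auto simp: jchain_Suc)
  qed (use Suc.IH in \<open>simp add: jchain_Suc\<close>)
qed

lemma jchain_Ncr_balance:
  "int (Ncr (jchain \<Xi> w k) a (a + 1)) - int (Ncr (jchain \<Xi> w k) (a + 1) a) =
     (if pos (jchain \<Xi> w k) > a then 1 else 0) - (if 0 > a then 1 else 0)"
proof (induction k)
  case 0
  then show ?case by (simp add: init_state_def)
next
  case (Suc k)
  show ?case
  proof (cases rule: step_cases[of \<Xi> w "jchain \<Xi> w k"])
    case (jump e)
    then show ?thesis using Suc.IH
      by (cases e; cases "pos (jchain \<Xi> w k) = a"; cases "pos (jchain \<Xi> w k) = a + 1") (auto simp: jchain_Suc)
  qed (use Suc.IH in \<open>simp add: jchain_Suc\<close>)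
qed

lemma jchain_Ncr_less_visited:
  "n < Ncr (jchain \<Xi> w i) y (y - 1) \<Longrightarrow>
    \<exists>j<i. pos (jchain \<Xi> w j) = y \<and> Ncr (jchain \<Xi> w j) y (y - 1) = n"
proof (induction i)
  case 0
  then show ?case by (simp add: init_state_def)
next
  case (Suc i)
  show ?case
  proof (cases "n < Ncr (jchain \<Xi> w i) y (y - 1)")
    case True
    then show ?thesis using Suc.IH by (meson less_SucI)
  next
    case False
    with Suc.prems have "Ncr (jchain \<Xi> w (Suc i)) y (y - 1) \<noteq> Ncr (jchain \<Xi> w i) y (y - 1)" by linarith
    from jchain_Ncr_SucD[OF this] False Suc.prems show ?thesis by auto
  qed
qed

lemma jchain_Zar_frozen:
  assumes "pos (jchain \<Xi> w K) = y" "K \<le> k" "Ncr (jchain \<Xi> w k) y (y - 1) = Ncr (jchain \<Xi> w K) y (y - 1)"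
  shows "Zar (jchain \<Xi> w k) (y - 1) = Zar (jchain \<Xi> w K) (y - 1) \<and> y \<le> pos (jchain \<Xi> w k)"
  using assms(2,3)
proof (induction k rule: dec_induct)
  case base
  then show ?case using assms(1) by simp
next
  case (step j)
  have "Ncr (jchain \<Xi> w j) y (y - 1) \<le> Ncr (jchain \<Xi> w (Suc j)) y (y - 1)"
    and "Ncr (jchain \<Xi> w K) y (y - 1) \<le> Ncr (jchain \<Xi> w j) y (y - 1)"
    using jchain_Ncr_Suc_mono jchain_Ncr_mono[OF step(1)] by blast+
  with step.prems have count: "Ncr (jchain \<Xi> w (Suc j)) y (y - 1) = Ncr (jchain \<Xi> w j) y (y - 1)"
    and IH: "Zar (jchain \<Xi> w j) (y - 1) = Zar (jchain \<Xi> w K) (y - 1)" "y \<le> pos (jchain \<Xi> w j)"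
    using step.IH by auto
  have pos: "y \<le> pos (jchain \<Xi> w (Suc j))"
  proof (rule ccontr)
    assume "\<not> ?thesis"
    with jchain_pos_Suc_dist[of j] IH(2) have "pos (jchain \<Xi> w j) = y" "pos (jchain \<Xi> w (Suc j)) = y - 1"
      by auto
    from jchain_Ncr_down_jump[OF this] count show False by simp
  qed
  then have "Zar (jchain \<Xi> w (Suc j)) (y - 1) = Zar (jchain \<Xi> w j) (y - 1)"
    using jchain_Zar_SucD[of j "y - 1"] by fastforce
  with IH pos show ?case by simp
qed

lemma jchain_down_jump_inj:
  assumes "pos (jchain \<Xi> w k) = y" "pos (jchain \<Xi> w (Suc k)) = y - 1"
    and "pos (jchain \<Xi> w k') = y" "pos (jchain \<Xi> w (Suc k')) = y - 1"
    and "Ncr (jchain \<Xi> w k) y (y - 1) = Ncr (jchain \<Xi> w k') y (y - 1)"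
  shows "k = k'"
proof (rule ccontr)
  have *: "False" if "pos (jchain \<Xi> w i) = y" "pos (jchain \<Xi> w (Suc i)) = y - 1" "i < j"
      "Ncr (jchain \<Xi> w i) y (y - 1) = Ncr (jchain \<Xi> w j) y (y - 1)" for i j
    using jchain_Ncr_down_jump[OF that(1,2)] jchain_Ncr_mono[of "Suc i" j y "y - 1"] that(3,4)
    by simp
  assume "k \<noteq> k'"
  then show False
    using *[OF assms(1,2), of k'] *[OF assms(3,4), of k] assms(5) by (metis linorder_neqE_nat)
qed

text \<open>Expressing Z(y - 1) and the two local times through the four edge counts around y - 1,
  the indicator terms of f^- are exactly the corrections in the balance of crossings.\<close>
lemma fw_div_ww_at_visit:
  assumes "pos (jchain \<Xi> w k) = y"
  shows "fw \<alpha> \<beta> False y (Ncr (jchain \<Xi> w k) y (y - 1)) / ww \<alpha> \<beta> (Zar (jchain \<Xi> w k) (y - 1)) =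
     exp (2 * \<beta> * (real (ltime (jchain \<Xi> w k) y) - \<alpha> * real (ltime (jchain \<Xi> w k) (y - 1))))"
proof -
  define n where "n = Ncr (jchain \<Xi> w k) y (y - 1)"
  define A where "A = Ncr (jchain \<Xi> w k) (y - 1) y"
  define B where "B = Ncr (jchain \<Xi> w k) (y - 2) (y - 1)"
  define C where "C = Ncr (jchain \<Xi> w k) (y - 1) (y - 2)"
  have bal_y: "A = n + (if 1 \<le> y then 1 else 0)"
    using jchain_Ncr_balance[of k "y - 1"] assms by (auto simp: A_def n_def split: if_splits)
  have bal_y1: "B = C + (if 2 \<le> y then 1 else 0)"
    using jchain_Ncr_balance[of k "y - 2"] assms by (auto simp: B_def C_def split: if_splits)
  have counts: "Zar (jchain \<Xi> w k) (y - 1) = B + n"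
    "ltime (jchain \<Xi> w k) y = A + n" "ltime (jchain \<Xi> w k) (y - 1) = B + C"
    using jchain_Zar_eq[of k "y - 1"] by (simp_all add: ltime_def A_def B_def C_def n_def)
  have "2 * \<beta> * (2 * (1 + \<alpha>) * real n - \<alpha> * (if y - 1 = 0 then 1 else 0)
          + (1 + \<alpha>) * (if - y < 0 then 1 else 0)) - 4 * \<beta> * \<alpha> * real (B + n)
        = 2 * \<beta> * (real (A + n) - \<alpha> * real (B + C))"
    using bal_y bal_y1 by (cases "y \<le> 0"; cases "y = 1"; simp add: algebra_simps)
  then show ?thesis
    by (simp add: fw_def ww_def exp_diff[symmetric] counts flip: n_def)
qed

end

section \<open>Budgeted weights\<close>

lemma suminf_le_reindex:
  fixes t u :: "nat \<Rightarrow> ennreal"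
  assumes "\<And>k. t k \<noteq> 0 \<Longrightarrow> t k = u (\<phi> k)" and "inj_on \<phi> {k. t k \<noteq> 0}"
  shows "suminf t \<le> suminf u"
proof (rule suminf_le_const[OF summableI])
  fix N
  define F where "F = {k. k < N \<and> t k \<noteq> 0}"
  have "sum t {..<N} = sum t F"
    unfolding F_def by (intro sum.mono_neutral_right) auto
  also have "\<dots> = sum (u \<circ> \<phi>) F"
    using assms(1) unfolding F_def by (intro sum.cong) auto
  also have "\<dots> = sum u (\<phi> ` F)"
    using assms(2) by (intro sum.reindex[symmetric]) (auto simp: F_def intro: inj_on_subset)
  also have "\<dots> \<le> suminf u"
    by (intro sum_le_suminf) (auto simp: F_def)
  finally show "sum t {..<N} \<le> suminf u" .
qed

lemma suminf_le_of_partial_sums_le: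
  fixes t a :: "nat \<Rightarrow> real"
  assumes a: "\<And>k. 0 \<le> a k" and t: "\<And>n. 0 \<le> t n"
    and tK: "\<And>n. t n \<noteq> 0 \<Longrightarrow> t n = a (K n) \<and> (\<Sum>k\<le>K n. a k) \<le> b"
    and inj: "inj_on K {n. t n \<noteq> 0}"
  shows "(\<Sum>n. ennreal (t n)) \<le> ennreal b"
proof (rule suminf_le_const[OF summableI])
  fix N
  define F where "F = {n. n < N \<and> t n \<noteq> 0}"
  have fin: "finite F" unfolding F_def by simp
  show "(\<Sum>n<N. ennreal (t n)) \<le> ennreal b"
  proof (cases "F = {}")
    case True
    then have "(\<Sum>n<N. t n) = 0" unfolding F_def by (intro sum.neutral) auto
    then show ?thesis by (simp add: t sum_ennreal)
  next
    case False
    have "Max (K ` F) \<in> K ` F"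
      using fin False by (intro Max_in) auto
    then obtain n0 where "n0 \<in> F" "K n0 = Max (K ` F)"
      by auto
    then have n0: "n0 \<in> F" "\<forall>n\<in>F. K n \<le> K n0"
      using Max_ge[OF finite_imageI[OF fin]] by auto
    have "(\<Sum>n<N. t n) = (\<Sum>n\<in>F. t n)"
      unfolding F_def by (intro sum.mono_neutral_right) auto
    also have "\<dots> = (\<Sum>n\<in>F. a (K n))"
      using tK by (intro sum.cong) (auto simp: F_def)
    also have "\<dots> = (\<Sum>k\<in>K ` F. a k)"
      using inj_on_subset[OF inj, of F] by (simp add: F_def sum.reindex subset_eq)
    also have "\<dots> \<le> (\<Sum>k\<le>K n0. a k)"
      using n0 a by (intro sum_mono2) auto
    also have "\<dots> \<le> b"
      using tK[of n0] n0(1) by (simp add: F_def)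
    finally show ?thesis by (simp add: t sum_ennreal ennreal_leI)
  qed
qed

definition visit_with_count :: "clocks \<Rightarrow> (nat \<Rightarrow> real) \<Rightarrow> int \<Rightarrow> nat \<Rightarrow> nat \<Rightarrow> bool"
  where "visit_with_count \<Xi> w y n k \<longleftrightarrow> pos (jchain \<Xi> w k) = y \<and> Ncr (jchain \<Xi> w k) y (y - 1) = n"

definition first_visit_with_count :: "clocks \<Rightarrow> (nat \<Rightarrow> real) \<Rightarrow> int \<Rightarrow> nat \<Rightarrow> nat"
  where "first_visit_with_count \<Xi> w y n = (LEAST k. visit_with_count \<Xi> w y n k)"

definition edge_weight :: "real \<Rightarrow> real \<Rightarrow> clocks \<Rightarrow> int \<Rightarrow> nat \<Rightarrow> real"
  where "edge_weight \<alpha> \<beta> \<Xi> y k = exp (2 * \<beta> * (real (ltime (jchain \<Xi> (ww \<alpha> \<beta>) k) y)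
           - \<alpha> * real (ltime (jchain \<Xi> (ww \<alpha> \<beta>) k) (y - 1))))"

definition budgeted_weight :: "real \<Rightarrow> real \<Rightarrow> clocks \<Rightarrow> int \<Rightarrow> real \<Rightarrow> nat \<Rightarrow> real"
  where "budgeted_weight \<alpha> \<beta> \<Xi> y b n =
    (let K = first_visit_with_count \<Xi> (ww \<alpha> \<beta>) y n in
     if (\<exists>k. visit_with_count \<Xi> (ww \<alpha> \<beta>) y n k) \<and> (\<Sum>k\<le>K. edge_weight \<alpha> \<beta> \<Xi> y k) \<le> b
     then edge_weight \<alpha> \<beta> \<Xi> y K else 0)"

lemma visit_with_count_first:
  "visit_with_count \<Xi> w y n k \<Longrightarrow> visit_with_count \<Xi> w y n (first_visit_with_count \<Xi> w y n)"
  "visit_with_count \<Xi> w y n k \<Longrightarrow> first_visit_with_count \<Xi> w y n \<le> k"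
  unfolding first_visit_with_count_def by (rule LeastI, assumption) (rule Least_le, assumption)

lemma edge_weight_nonneg: "0 \<le> edge_weight \<alpha> \<beta> \<Xi> y k"
  by (simp add: edge_weight_def)

lemma budgeted_weight_nonneg: "0 \<le> budgeted_weight \<alpha> \<beta> \<Xi> y b n"
  by (simp add: budgeted_weight_def Let_def edge_weight_nonneg)

lemma budgeted_weight_nonzeroD:
  assumes "budgeted_weight \<alpha> \<beta> \<Xi> y b n \<noteq> 0"
  defines "K \<equiv> first_visit_with_count \<Xi> (ww \<alpha> \<beta>) y n"
  shows "visit_with_count \<Xi> (ww \<alpha> \<beta>) y n K"
    and "budgeted_weight \<alpha> \<beta> \<Xi> y b n = edge_weight \<alpha> \<beta> \<Xi> y K"
    and "(\<Sum>k\<le>K. edge_weight \<alpha> \<beta> \<Xi> y k) \<le> b"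
proof -
  have active: "(\<exists>k. visit_with_count \<Xi> (ww \<alpha> \<beta>) y n k)
      \<and> (\<Sum>k\<le>K. edge_weight \<alpha> \<beta> \<Xi> y k) \<le> b"
  proof (rule ccontr)
    assume "\<not> ?thesis"
    then have "budgeted_weight \<alpha> \<beta> \<Xi> y b n = 0"
      unfolding budgeted_weight_def Let_def K_def by (rule if_not_P)
    with assms(1) show False by contradiction
  qed
  then show "visit_with_count \<Xi> (ww \<alpha> \<beta>) y n K"
    unfolding K_def using visit_with_count_first(1) by blast
  show "budgeted_weight \<alpha> \<beta> \<Xi> y b n = edge_weight \<alpha> \<beta> \<Xi> y K"
    unfolding budgeted_weight_def Let_def K_def[symmetric] using active by (rule if_P)
  show "(\<Sum>k\<le>K. edge_weight \<alpha> \<beta> \<Xi> y k) \<le> b"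
    using active by (rule conjunct2)
qed

lemma suminf_budgeted_weight_le: "(\<Sum>n. ennreal (budgeted_weight \<alpha> \<beta> \<Xi> y b n)) \<le> ennreal b"
proof (rule suminf_le_of_partial_sums_le[OF edge_weight_nonneg budgeted_weight_nonneg])
  let ?K = "first_visit_with_count \<Xi> (ww \<alpha> \<beta>) y"
  show "budgeted_weight \<alpha> \<beta> \<Xi> y b n = edge_weight \<alpha> \<beta> \<Xi> y (?K n)
      \<and> (\<Sum>k\<le>?K n. edge_weight \<alpha> \<beta> \<Xi> y k) \<le> b"
    if "budgeted_weight \<alpha> \<beta> \<Xi> y b n \<noteq> 0" for n
    using budgeted_weight_nonzeroD[OF that] by blast
  show "inj_on ?K {n. budgeted_weight \<alpha> \<beta> \<Xi> y b n \<noteq> 0}"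
  proof (rule inj_onI)
    fix n n'
    assume "n \<in> {n. budgeted_weight \<alpha> \<beta> \<Xi> y b n \<noteq> 0}"
      and "n' \<in> {n. budgeted_weight \<alpha> \<beta> \<Xi> y b n \<noteq> 0}" and "?K n = ?K n'"
    then show "n = n'"
      using budgeted_weight_nonzeroD(1)[of \<alpha> \<beta> \<Xi> y b n] budgeted_weight_nonzeroD(1)[of \<alpha> \<beta> \<Xi> y b n']
      by (simp add: visit_with_count_def)
  qed
qed

lemma jchain_agree:
  assumes agree: "\<And>b m z. \<not> (b = False \<and> z = y \<and> n \<le> m) \<Longrightarrow> \<Xi> b m z = \<Xi>' b m z"
    and "\<forall>i<j. pos (jchain \<Xi> w i) = y \<longrightarrow> Ncr (jchain \<Xi> w i) y (y - 1) < n"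
  shows "jchain \<Xi> w j = jchain \<Xi>' w j"
  using assms(2)
proof (induction j)
  case 0
  then show ?case by simp
next
  case (Suc j)
  have "pos (jchain \<Xi> w j) = y \<longrightarrow> Ncr (jchain \<Xi> w j) y (y - 1) < n"
    using Suc.prems by simp
  then have "step \<Xi> w (jchain \<Xi> w j) = step \<Xi>' w (jchain \<Xi> w j)"
    by (intro step_cong agree) (auto simp: sg_def)
  with Suc show ?case by (simp add: jchain_Suc)
qed

text \<open>Up to the first visit with count \<open>n\<close> (or forever, if there is none) the chain never reads
  the clocks \<open>\<Xi> False m y\<close> with \<open>m \<ge> n\<close>.\<close>
lemma budgeted_weight_cong:
  assumes agree: "\<And>b m z. \<not> (b = False \<and> z = y \<and> n \<le> m) \<Longrightarrow> \<Xi> b m z = \<Xi>' b m z"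
  shows "budgeted_weight \<alpha> \<beta> \<Xi> y b n = budgeted_weight \<alpha> \<beta> \<Xi>' y b n"
proof -
  define w where "w = ww \<alpha> \<beta>"
  have below: "Ncr (jchain \<Xi> w i) y (y - 1) < n"
    if "pos (jchain \<Xi> w i) = y" "\<forall>k\<le>i. \<not> visit_with_count \<Xi> w y n k" for i
  proof (rule ccontr)
    assume "\<not> ?thesis"
    then consider "Ncr (jchain \<Xi> w i) y (y - 1) = n" | "n < Ncr (jchain \<Xi> w i) y (y - 1)"
      by linarith
    then show False
    proof cases
      case 1
      with that show False by (auto simp: visit_with_count_def)
    next
      case 2
      then obtain j where "j < i" "visit_with_count \<Xi> w y n j"
        using jchain_Ncr_less_visited that(1) unfolding visit_with_count_def by blast
      with that(2) show False by auto
    qed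
  qed
  have eq: "jchain \<Xi> w j = jchain \<Xi>' w j" if no: "\<forall>k<j. \<not> visit_with_count \<Xi> w y n k" for j
  proof -
    have "\<forall>i<j. pos (jchain \<Xi> w i) = y \<longrightarrow> Ncr (jchain \<Xi> w i) y (y - 1) < n"
    proof (intro allI impI)
      fix i assume "i < j" "pos (jchain \<Xi> w i) = y"
      with no show "Ncr (jchain \<Xi> w i) y (y - 1) < n"
        by (intro below) auto
    qed
    with agree show ?thesis
      by (rule jchain_agree)
  qed
  show ?thesis
  proof (cases "\<exists>k. visit_with_count \<Xi> w y n k")
    case True
    define K where "K = first_visit_with_count \<Xi> w y n"
    have visit: "visit_with_count \<Xi> w y n K"
      using True visit_with_count_first(1) unfolding K_def by blast
    have no_visit: "\<forall>k<j. \<not> visit_with_count \<Xi> w y n k" if "j \<le> K" for j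
      using that not_less_Least[of _ "visit_with_count \<Xi> w y n"]
      unfolding K_def first_visit_with_count_def by fastforce
    have first': "first_visit_with_count \<Xi>' w y n = K"
      unfolding first_visit_with_count_def
    proof (rule Least_equality)
      show "visit_with_count \<Xi>' w y n K"
        using visit eq[OF no_visit] by (simp add: visit_with_count_def)
      show "K \<le> i" if "visit_with_count \<Xi>' w y n i" for i
      proof (rule ccontr)
        assume "\<not> K \<le> i"
        then have "\<not> visit_with_count \<Xi> w y n i"
          using no_visit[of K] by simp
        moreover have "visit_with_count \<Xi> w y n i"
          using that eq[OF no_visit[of i]] \<open>\<not> K \<le> i\<close> by (simp add: visit_with_count_def)
        ultimately show False by contradiction
      qed
    qed
    have "edge_weight \<alpha> \<beta> \<Xi> y k = edge_weight \<alpha> \<beta> \<Xi>' y k" if "k \<le> K" for k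
      using eq[OF no_visit[OF that]] by (simp add: edge_weight_def w_def)
    then show ?thesis
      using True visit eq[OF no_visit, of K] first'
      by (auto simp: budgeted_weight_def Let_def K_def visit_with_count_def w_def[symmetric]
          intro!: sum.cong)
  next
    case False
    then have "jchain \<Xi> w k = jchain \<Xi>' w k" for k
      by (intro eq) auto
    with False have "\<not> visit_with_count \<Xi>' w y n k" for k
      unfolding visit_with_count_def by metis
    with False show ?thesis by (simp add: budgeted_weight_def w_def)
  qed
qed

definition Tminus_majorant :: "real \<Rightarrow> real \<Rightarrow> clocks \<Rightarrow> int \<Rightarrow> real \<Rightarrow> ennreal"
  where "Tminus_majorant \<alpha> \<beta> \<Xi> y b =
    (\<Sum>n. ennreal (\<Xi> False n y) * ennreal (budgeted_weight \<alpha> \<beta> \<Xi> y b n / fw \<alpha> \<beta> False y n))"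

lemma fw_pos: "0 < fw \<alpha> \<beta> b y n"
  by (simp add: fw_def)

lemma ww_pos: "0 < ww \<alpha> \<beta> n"
  by (simp add: ww_def)

lemma Tminus_le_majorant:
  assumes series: "(\<Sum>k. ennreal (edge_weight \<alpha> \<beta> \<Xi> y k)) \<le> ennreal b" and "0 \<le> b"
  shows "Tminus \<Xi> (ww \<alpha> \<beta>) y \<le> Tminus_majorant \<alpha> \<beta> \<Xi> y b"
proof -
  let ?X = "jchain \<Xi> (ww \<alpha> \<beta>)"
  let ?count = "\<lambda>k. Ncr (?X k) y (y - 1)"
  define down where "down k \<longleftrightarrow> pos (?X k) = y \<and> pos (?X (Suc k)) = y - 1" for k
  define t where
    "t k = (if down k then ennreal (\<Xi> False (?count k) y / ww \<alpha> \<beta> (Zar (?X k) (y - 1))) else 0)" for k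
  define u where
    "u n = ennreal (\<Xi> False n y) * ennreal (budgeted_weight \<alpha> \<beta> \<Xi> y b n / fw \<alpha> \<beta> False y n)" for n
  have "suminf t \<le> suminf u"
  proof (rule suminf_le_reindex[where \<phi> = ?count])
    show "inj_on ?count {k. t k \<noteq> 0}"
      by (rule inj_onI) (auto intro: jchain_down_jump_inj simp: t_def down_def split: if_splits)
    fix k
    assume "t k \<noteq> 0"
    then have "down k" by (auto simp: t_def split: if_splits)
    define n where "n = ?count k"
    define K where "K = first_visit_with_count \<Xi> (ww \<alpha> \<beta>) y n"
    have visit: "visit_with_count \<Xi> (ww \<alpha> \<beta>) y n k"
      using \<open>down k\<close> by (simp add: visit_with_count_def n_def down_def)
    note first = visit_with_count_first[OF visit, folded K_def]
    have Z: "Zar (?X k) (y - 1) = Zar (?X K) (y - 1)"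
      using jchain_Zar_frozen[of \<Xi> "ww \<alpha> \<beta>" K y k] first by (simp add: visit_with_count_def n_def)
    have "ennreal (\<Sum>k'\<le>K. edge_weight \<alpha> \<beta> \<Xi> y k') \<le> (\<Sum>k. ennreal (edge_weight \<alpha> \<beta> \<Xi> y k))"
      by (simp add: edge_weight_nonneg sum_le_suminf flip: sum_ennreal)
    with series \<open>0 \<le> b\<close> have "(\<Sum>k'\<le>K. edge_weight \<alpha> \<beta> \<Xi> y k') \<le> b"
      by (simp add: ennreal_le_iff[symmetric] del: ennreal_le_iff)
    with visit have "budgeted_weight \<alpha> \<beta> \<Xi> y b n = edge_weight \<alpha> \<beta> \<Xi> y K"
      unfolding budgeted_weight_def Let_def K_def by auto
    also have "\<dots> = fw \<alpha> \<beta> False y n / ww \<alpha> \<beta> (Zar (?X k) (y - 1))"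
      using fw_div_ww_at_visit[of \<Xi> "ww \<alpha> \<beta>" K y \<alpha> \<beta>] first Z
      by (simp add: edge_weight_def visit_with_count_def)
    finally have "budgeted_weight \<alpha> \<beta> \<Xi> y b n / fw \<alpha> \<beta> False y n = 1 / ww \<alpha> \<beta> (Zar (?X k) (y - 1))"
      using fw_pos[of \<alpha> \<beta> False y n] by simp
    then show "t k = u (?count k)"
      using \<open>down k\<close> ww_pos[of \<alpha> \<beta>]
      by (simp add: t_def u_def n_def[symmetric] ennreal_mult''[symmetric] less_imp_le)
  qed
  then show ?thesis
    unfolding Tminus_def Tminus_majorant_def t_def u_def down_def .
qed

section \<open>Measurability\<close>

lemma step_pos_eq: "pos (step \<Xi> w s) = (if stuck s \<or> remt \<Xi> w s True = remt \<Xi> w s False then pos s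
   else if remt \<Xi> w s True < remt \<Xi> w s False then pos s + 1 else pos s - 1)"
  by (simp add: step_def Let_def)

lemma step_Ncr_eq: "Ncr (step \<Xi> w s) a b = (if stuck s \<or> remt \<Xi> w s True = remt \<Xi> w s False then Ncr s a b
   else if a = pos s \<and> b = pos (step \<Xi> w s) then Ncr s a b + 1 else Ncr s a b)"
  by (simp add: step_def Let_def)

lemma step_Zar_eq: "Zar (step \<Xi> w s) a = (if stuck s \<or> remt \<Xi> w s True = remt \<Xi> w s False then Zar s a
   else if a = pos (step \<Xi> w s) then Zar s a + 1 else Zar s a)"
  by (simp add: step_def Let_def)

lemma step_clk_eq: "clk (step \<Xi> w s) x d = (if stuck s \<or> remt \<Xi> w s True = remt \<Xi> w s False then clk s x d
   else if x + sg d = pos (step \<Xi> w s) then 0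
   else if x = pos s then clk s x d + min (remt \<Xi> w s True) (remt \<Xi> w s False) else clk s x d)"
  by (simp add: step_def Let_def)

lemma step_stuck_eq: "stuck (step \<Xi> w s) = (stuck s \<or> remt \<Xi> w s True = remt \<Xi> w s False)"
  by (simp add: step_def Let_def)

lemma jchain_measurable:
  fixes X :: "bool \<times> nat \<times> int \<Rightarrow> 'b \<Rightarrow> real" and w :: "nat \<Rightarrow> real" and k :: nat
  assumes X: "\<And>i. X i \<in> borel_measurable N"
  defines "S \<omega> \<equiv> jchain (\<lambda>b k z. X (b, k, z) \<omega>) w k"
  shows "(\<lambda>\<omega>. pos (S \<omega>)) \<in> measurable N (count_space UNIV)"
    and "(\<lambda>\<omega>. Ncr (S \<omega>) a b) \<in> measurable N (count_space UNIV)"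
    and "(\<lambda>\<omega>. Zar (S \<omega>) a) \<in> measurable N (count_space UNIV)"
    and "(\<lambda>\<omega>. clk (S \<omega>) a d) \<in> borel_measurable N"
    and "(\<lambda>\<omega>. stuck (S \<omega>)) \<in> measurable N (count_space UNIV)"
proof -
  have "(\<lambda>\<omega>. pos (jchain (\<lambda>b k z. X (b, k, z) \<omega>) w k)) \<in> measurable N (count_space UNIV) \<and>
     (\<forall>a b. (\<lambda>\<omega>. Ncr (jchain (\<lambda>b k z. X (b, k, z) \<omega>) w k) a b) \<in> measurable N (count_space UNIV)) \<and>
     (\<forall>a. (\<lambda>\<omega>. Zar (jchain (\<lambda>b k z. X (b, k, z) \<omega>) w k) a) \<in> measurable N (count_space UNIV)) \<and>
     (\<forall>a d. (\<lambda>\<omega>. clk (jchain (\<lambda>b k z. X (b, k, z) \<omega>) w k) a d) \<in> borel_measurable N) \<and>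
     (\<lambda>\<omega>. stuck (jchain (\<lambda>b k z. X (b, k, z) \<omega>) w k)) \<in> measurable N (count_space UNIV)"
  proof (induction k)
    case 0
    then show ?case by (simp add: init_state_def)
  next
    case (Suc k)
    define S where "S \<omega> = jchain (\<lambda>b k z. X (b, k, z) \<omega>) w k" for \<omega>
    define \<Xi> where "\<Xi> \<omega> = (\<lambda>b k z. X (b, k, z) \<omega>)" for \<omega>
    have P [measurable]: "(\<lambda>\<omega>. pos (S \<omega>)) \<in> measurable N (count_space UNIV)"
      and Nc [measurable]: "\<And>a b. (\<lambda>\<omega>. Ncr (S \<omega>) a b) \<in> measurable N (count_space UNIV)"
      and Z [measurable]: "\<And>a. (\<lambda>\<omega>. Zar (S \<omega>) a) \<in> measurable N (count_space UNIV)"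
      and [measurable]: "\<And>a d. (\<lambda>\<omega>. clk (S \<omega>) a d) \<in> borel_measurable N"
      and [measurable]: "(\<lambda>\<omega>. stuck (S \<omega>)) \<in> measurable N (count_space UNIV)"
      using Suc.IH unfolding S_def by auto
    text \<open>The clock read at the current site depends on the random site and edge count, so
      measurability goes through composition over the countable ranges of these indices.\<close>
    have [measurable]: "(\<lambda>\<omega>. remt (\<Xi> \<omega>) w (S \<omega>) e) \<in> borel_measurable N" for e
    proof -
      have "(\<lambda>\<omega>. (\<lambda>p \<omega>. X (e, Ncr (S \<omega>) p (p + sg e), p) \<omega> / w (Zar (S \<omega>) (p + sg e))
                 - clk (S \<omega>) p e) (pos (S \<omega>)) \<omega>) \<in> borel_measurable N"
      proof (rule measurable_compose_countable[OF _ P])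
        fix p :: int
        have "(\<lambda>\<omega>. (\<lambda>m \<omega>. X (e, m, p) \<omega>) (Ncr (S \<omega>) p (p + sg e)) \<omega>) \<in> borel_measurable N"
          by (rule measurable_compose_countable[OF _ Nc]) (rule X)
        moreover have "(\<lambda>\<omega>. w (Zar (S \<omega>) (p + sg e))) \<in> borel_measurable N"
          using measurable_compose[OF Z measurable_count_space] by (simp add: comp_def)
        ultimately show "(\<lambda>\<omega>. X (e, Ncr (S \<omega>) p (p + sg e), p) \<omega> / w (Zar (S \<omega>) (p + sg e))
            - clk (S \<omega>) p e) \<in> borel_measurable N"
          by measurable
      qed
      then show ?thesis by (simp add: remt_def thr_def \<Xi>_def)
    qed
    have pos_step [measurable]: "(\<lambda>\<omega>. pos (step (\<Xi> \<omega>) w (S \<omega>))) \<in> measurable N (count_space UNIV)"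
      unfolding step_pos_eq by measurable
    have "(\<lambda>\<omega>. Ncr (step (\<Xi> \<omega>) w (S \<omega>)) a b) \<in> measurable N (count_space UNIV)" for a b
      unfolding step_Ncr_eq by measurable
    moreover have "(\<lambda>\<omega>. Zar (step (\<Xi> \<omega>) w (S \<omega>)) a) \<in> measurable N (count_space UNIV)" for a
      unfolding step_Zar_eq by measurable
    moreover have "(\<lambda>\<omega>. clk (step (\<Xi> \<omega>) w (S \<omega>)) a d) \<in> borel_measurable N" for a d
      unfolding step_clk_eq by measurable
    moreover have "(\<lambda>\<omega>. stuck (step (\<Xi> \<omega>) w (S \<omega>))) \<in> measurable N (count_space UNIV)"
      unfolding step_stuck_eq by measurable
    ultimately show ?case
      using pos_step unfolding S_def \<Xi>_def by (simp add: jchain_Suc)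
  qed
  then show "(\<lambda>\<omega>. pos (S \<omega>)) \<in> measurable N (count_space UNIV)"
    and "(\<lambda>\<omega>. Ncr (S \<omega>) a b) \<in> measurable N (count_space UNIV)"
    and "(\<lambda>\<omega>. Zar (S \<omega>) a) \<in> measurable N (count_space UNIV)"
    and "(\<lambda>\<omega>. clk (S \<omega>) a d) \<in> borel_measurable N"
    and "(\<lambda>\<omega>. stuck (S \<omega>)) \<in> measurable N (count_space UNIV)"
    unfolding S_def by blast+
qed

lemma budgeted_weight_measurable:
  fixes X :: "bool \<times> nat \<times> int \<Rightarrow> 'b \<Rightarrow> real"
  assumes X: "\<And>i. X i \<in> borel_measurable N"
  shows "(\<lambda>\<omega>. budgeted_weight \<alpha> \<beta> (\<lambda>b k z. X (b, k, z) \<omega>) y c n) \<in> borel_measurable N"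
proof -
  define \<Xi> where "\<Xi> \<omega> = (\<lambda>b k z. X (b, k, z) \<omega>)" for \<omega>
  define S where "S \<omega> k = jchain (\<Xi> \<omega>) (ww \<alpha> \<beta>) k" for \<omega> k
  have [measurable]: "(\<lambda>\<omega>. pos (S \<omega> k)) \<in> measurable N (count_space UNIV)"
    and Ncr_meas [measurable]: "(\<lambda>\<omega>. Ncr (S \<omega> k) a b) \<in> measurable N (count_space UNIV)"
    and Zar_meas [measurable]: "(\<lambda>\<omega>. Zar (S \<omega> k) a) \<in> measurable N (count_space UNIV)" for k a b
    unfolding S_def \<Xi>_def by (fact jchain_measurable[OF X])+
  have [measurable]: "Measurable.pred N (\<lambda>\<omega>. visit_with_count (\<Xi> \<omega>) (ww \<alpha> \<beta>) y n k)" for k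
    unfolding visit_with_count_def S_def[symmetric] by measurable
  have first [measurable]: "(\<lambda>\<omega>. first_visit_with_count (\<Xi> \<omega>) (ww \<alpha> \<beta>) y n) \<in> measurable N (count_space UNIV)"
    unfolding first_visit_with_count_def by measurable
  have [measurable]: "(\<lambda>\<omega>. edge_weight \<alpha> \<beta> (\<Xi> \<omega>) y k) \<in> borel_measurable N" for k
  proof -
    have [measurable]: "(\<lambda>\<omega>. real (Ncr (S \<omega> k) a b)) \<in> borel_measurable N" for a b
      using measurable_compose[OF Ncr_meas measurable_count_space, of real] by (simp add: comp_def)
    show ?thesis
      unfolding edge_weight_def ltime_def S_def[symmetric] of_nat_add by measurable
  qed
  have "(\<lambda>\<omega>. (\<lambda>K \<omega>. \<Sum>k\<le>K. edge_weight \<alpha> \<beta> (\<Xi> \<omega>) y k)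
      (first_visit_with_count (\<Xi> \<omega>) (ww \<alpha> \<beta>) y n) \<omega>) \<in> borel_measurable N"
    by (rule measurable_compose_countable[OF _ first]) measurable
  moreover have "(\<lambda>\<omega>. (\<lambda>K \<omega>. edge_weight \<alpha> \<beta> (\<Xi> \<omega>) y K)
      (first_visit_with_count (\<Xi> \<omega>) (ww \<alpha> \<beta>) y n) \<omega>) \<in> borel_measurable N"
    by (rule measurable_compose_countable[OF _ first]) measurable
  ultimately show ?thesis
    unfolding budgeted_weight_def Let_def \<Xi>_def[symmetric] by measurable
qed

section \<open>Expectations\<close>

lemma (in prob_space) nn_integral_exponential:
  assumes D: "distributed M lborel X (\<lambda>x. ennreal (exponential_density (1 / f) x))" and "0 < f"
  shows "(\<integral>\<^sup>+\<omega>. ennreal (X \<omega>) \<partial>M) = ennreal f"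
proof -
  have l: "0 < 1 / f" using \<open>0 < f\<close> by simp
  have "integrable M X"
    using erlang_ith_moment_integrable[OF l D, of 1] by simp
  moreover have "AE x in M. 0 \<le> X x"
    by (subst distributed_AE2[OF D]) (auto simp: erlang_density_def)
  moreover have "expectation X = f"
    using exponential_distributed_expectation[OF l D] by simp
  ultimately show ?thesis
    by (simp add: nn_integral_eq_integral)
qed

lemma (in prob_space) nn_integral_indep_restrict_mult:
  fixes X :: "'i \<Rightarrow> 'a \<Rightarrow> real" and h :: "('i \<Rightarrow> real) \<Rightarrow> ennreal"
  assumes indep: "indep_vars (\<lambda>_. borel) X I" and "i \<in> I" "B \<subseteq> I" "i \<notin> B"
    and h: "h \<in> borel_measurable (PiM B (\<lambda>_. borel))"
  shows "(\<integral>\<^sup>+\<omega>. ennreal (X i \<omega>) * h (restrict (\<lambda>j. X j \<omega>) B) \<partial>M)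
    = (\<integral>\<^sup>+\<omega>. ennreal (X i \<omega>) \<partial>M) * (\<integral>\<^sup>+\<omega>. h (restrict (\<lambda>j. X j \<omega>) B) \<partial>M)"
proof -
  have borel_bool: "case_bool borel borel = (\<lambda>_::bool. borel)"
    by (rule ext) (simp split: bool.split)
  have "indep_var (PiM {i} (\<lambda>_. borel)) (\<lambda>\<omega>. restrict (\<lambda>j. X j \<omega>) {i})
      (PiM B (\<lambda>_. borel)) (\<lambda>\<omega>. restrict (\<lambda>j. X j \<omega>) B)"
    using assms by (intro indep_var_restrict[OF indep]) auto
  then have "indep_var borel ((\<lambda>x. ennreal (x i)) \<circ> (\<lambda>\<omega>. restrict (\<lambda>j. X j \<omega>) {i}))
      borel (h \<circ> (\<lambda>\<omega>. restrict (\<lambda>j. X j \<omega>) B))"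
    by (rule indep_var_compose) (use h in measurable)
  then have "indep_vars (\<lambda>_. borel)
      (case_bool (\<lambda>\<omega>. ennreal (X i \<omega>)) (\<lambda>\<omega>. h (restrict (\<lambda>j. X j \<omega>) B))) UNIV"
    unfolding indep_var_def comp_def by (simp add: borel_bool)
  from indep_vars_nn_integral[OF _ this] show ?thesis
    by (simp add: UNIV_bool mult.commute)
qed

lemma (in prob_space) nn_integral_Tminus_majorant_le:
  fixes \<xi> :: "bool \<times> nat \<times> int \<Rightarrow> 'a \<Rightarrow> real"
  assumes indep: "indep_vars (\<lambda>_. borel) \<xi> UNIV"
    and exponential: "\<And>b k z. distributed M lborel (\<xi> (b, k, z))
            (\<lambda>x. ennreal (exponential_density (1 / fw \<alpha> \<beta> b z k) x))"
  shows "(\<integral>\<^sup>+\<omega>. Tminus_majorant \<alpha> \<beta> (\<lambda>b k z. \<xi> (b, k, z) \<omega>) y c \<partial>M) \<le> ennreal c"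
proof -
  have \<xi>_meas [measurable]: "\<xi> i \<in> borel_measurable M" for i
    using distributed_measurable[OF exponential] by (cases i) auto
  let ?\<Xi> = "\<lambda>\<omega> b k z. \<xi> (b, k, z) \<omega>"
  have [measurable]: "(\<lambda>\<omega>. budgeted_weight \<alpha> \<beta> (?\<Xi> \<omega>) y c n) \<in> borel_measurable M" for n
    by (rule budgeted_weight_measurable) (rule \<xi>_meas)
  have summand: "(\<integral>\<^sup>+\<omega>. ennreal (\<xi> (False, n, y) \<omega>)
        * ennreal (budgeted_weight \<alpha> \<beta> (?\<Xi> \<omega>) y c n / fw \<alpha> \<beta> False y n) \<partial>M)
      = (\<integral>\<^sup>+\<omega>. ennreal (budgeted_weight \<alpha> \<beta> (?\<Xi> \<omega>) y c n) \<partial>M)" for n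
  proof -
    define B where "B = - {(False, m, y) | m. n \<le> m}"
    define h where
      "h x = ennreal (budgeted_weight \<alpha> \<beta> (\<lambda>b k z. if (b, k, z) \<in> B then x (b, k, z) else 0) y c n)"
      for x :: "bool \<times> nat \<times> int \<Rightarrow> real"
    have "(\<lambda>x. if i \<in> B then x i else 0) \<in> borel_measurable (PiM B (\<lambda>_. borel))" for i
      by (cases "i \<in> B") simp_all
    then have h_meas: "h \<in> borel_measurable (PiM B (\<lambda>_. borel))"
      unfolding h_def by (intro measurable_compose[OF budgeted_weight_measurable]) auto
    have h_restrict: "h (restrict (\<lambda>j. \<xi> j \<omega>) B) = ennreal (budgeted_weight \<alpha> \<beta> (?\<Xi> \<omega>) y c n)" for \<omega>
      unfolding h_def by (intro arg_cong[where f = ennreal] budgeted_weight_cong) (auto simp: B_def)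
    have ratio: "ennreal (budgeted_weight \<alpha> \<beta> (?\<Xi> \<omega>) y c n / fw \<alpha> \<beta> False y n)
        = ennreal (1 / fw \<alpha> \<beta> False y n) * ennreal (budgeted_weight \<alpha> \<beta> (?\<Xi> \<omega>) y c n)" for \<omega>
      using fw_pos[of \<alpha> \<beta> False y n] budgeted_weight_nonneg
      by (subst ennreal_mult[symmetric]) simp_all
    have "(\<integral>\<^sup>+\<omega>. ennreal (\<xi> (False, n, y) \<omega>)
          * ennreal (budgeted_weight \<alpha> \<beta> (?\<Xi> \<omega>) y c n / fw \<alpha> \<beta> False y n) \<partial>M)
        = ennreal (1 / fw \<alpha> \<beta> False y n)
          * (\<integral>\<^sup>+\<omega>. ennreal (\<xi> (False, n, y) \<omega>) * h (restrict (\<lambda>j. \<xi> j \<omega>) B) \<partial>M)"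
      by (subst nn_integral_cmult[symmetric])
        (auto simp: h_restrict ratio ac_simps intro!: nn_integral_cong)
    also have "\<dots> = ennreal (1 / fw \<alpha> \<beta> False y n) * ennreal (fw \<alpha> \<beta> False y n)
        * (\<integral>\<^sup>+\<omega>. h (restrict (\<lambda>j. \<xi> j \<omega>) B) \<partial>M)"
      using nn_integral_indep_restrict_mult[OF indep _ _ _ h_meas, of "(False, n, y)"]
        nn_integral_exponential[OF exponential fw_pos]
      by (simp add: B_def mult.assoc)
    also have "\<dots> = (\<integral>\<^sup>+\<omega>. ennreal (budgeted_weight \<alpha> \<beta> (?\<Xi> \<omega>) y c n) \<partial>M)"
      using fw_pos[of \<alpha> \<beta> False y n] by (simp add: h_restrict flip: ennreal_mult)
    finally show ?thesis .
  qed
  have "(\<integral>\<^sup>+\<omega>. Tminus_majorant \<alpha> \<beta> (?\<Xi> \<omega>) y c \<partial>M)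
      = (\<Sum>n. \<integral>\<^sup>+\<omega>. ennreal (\<xi> (False, n, y) \<omega>)
          * ennreal (budgeted_weight \<alpha> \<beta> (?\<Xi> \<omega>) y c n / fw \<alpha> \<beta> False y n) \<partial>M)"
    unfolding Tminus_majorant_def by (intro nn_integral_suminf) measurable
  also have "\<dots> = (\<Sum>n. \<integral>\<^sup>+\<omega>. ennreal (budgeted_weight \<alpha> \<beta> (?\<Xi> \<omega>) y c n) \<partial>M)"
    by (simp only: summand)
  also have "\<dots> = (\<integral>\<^sup>+\<omega>. (\<Sum>n. ennreal (budgeted_weight \<alpha> \<beta> (?\<Xi> \<omega>) y c n)) \<partial>M)"
    by (intro nn_integral_suminf[symmetric]) measurable
  also have "\<dots> \<le> (\<integral>\<^sup>+\<omega>. ennreal c \<partial>M)"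
    by (intro nn_integral_mono suminf_budgeted_weight_le)
  finally show ?thesis
    by (simp add: emeasure_space_1)
qed

lemma (in prob_space) AE_Tminus_majorant_finite:
  fixes \<xi> :: "bool \<times> nat \<times> int \<Rightarrow> 'a \<Rightarrow> real"
  assumes indep: "indep_vars (\<lambda>_. borel) \<xi> UNIV"
    and exponential: "\<And>b k z. distributed M lborel (\<xi> (b, k, z))
            (\<lambda>x. ennreal (exponential_density (1 / fw \<alpha> \<beta> b z k) x))"
  shows "AE \<omega> in M. Tminus_majorant \<alpha> \<beta> (\<lambda>b k z. \<xi> (b, k, z) \<omega>) y c \<noteq> \<infinity>"
proof (rule nn_integral_PInf_AE)
  have \<xi>_meas [measurable]: "\<xi> i \<in> borel_measurable M" for i
    using distributed_measurable[OF exponential] by (cases i) auto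
  have [measurable]: "(\<lambda>\<omega>. budgeted_weight \<alpha> \<beta> (\<lambda>b k z. \<xi> (b, k, z) \<omega>) y c n) \<in> borel_measurable M" for n
    by (rule budgeted_weight_measurable) (rule \<xi>_meas)
  show "(\<lambda>\<omega>. Tminus_majorant \<alpha> \<beta> (\<lambda>b k z. \<xi> (b, k, z) \<omega>) y c) \<in> borel_measurable M"
    unfolding Tminus_majorant_def by measurable
  show "(\<integral>\<^sup>+\<omega>. Tminus_majorant \<alpha> \<beta> (\<lambda>b k z. \<xi> (b, k, z) \<omega>) y c \<partial>M) \<noteq> \<infinity>"
    using nn_integral_Tminus_majorant_le[OF indep exponential]
    unfolding infinity_ennreal_def by (rule neq_top_trans[OF ennreal_neq_top])
qed

theorem mainTheorem7:
  fixes M :: "'a measure" and \<xi> :: "bool \<times> nat \<times> int \<Rightarrow> 'a \<Rightarrow> real"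
    and \<alpha> \<beta> :: real and y :: int
  assumes "prob_space M"
    and "\<alpha> > 1/3" and "\<beta> > 0"
    and "prob_space.indep_vars M (\<lambda>_. borel) \<xi> UNIV"
    and "\<And>b k z. distributed M lborel (\<xi> (b, k, z))
            (\<lambda>x. ennreal (exponential_density (1 / fw \<alpha> \<beta> b z k) x))"
  shows "AE \<omega> in M.
           (\<Sum>k. ennreal (exp (2 * \<beta> * (real (ltime (jchain (\<lambda>b k z. \<xi> (b, k, z) \<omega>) (ww \<alpha> \<beta>) k) y)
               - \<alpha> * real (ltime (jchain (\<lambda>b k z. \<xi> (b, k, z) \<omega>) (ww \<alpha> \<beta>) k) (y - 1)))))) < \<infinity>
           \<longrightarrow> Tminus (\<lambda>b k z. \<xi> (b, k, z) \<omega>) (ww \<alpha> \<beta>) y < \<infinity>"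
proof -
  interpret prob_space M by (rule assms(1))
  let ?\<Xi> = "\<lambda>\<omega> b k z. \<xi> (b, k, z) \<omega>"
  have "AE \<omega> in M. \<forall>m::nat. Tminus_majorant \<alpha> \<beta> (?\<Xi> \<omega>) y (real m) \<noteq> \<infinity>"
    using AE_Tminus_majorant_finite[OF assms(4,5)] by (simp add: AE_all_countable)
  then show ?thesis
  proof (rule eventually_mono, intro impI)
    fix \<omega>
    assume finite: "\<forall>m::nat. Tminus_majorant \<alpha> \<beta> (?\<Xi> \<omega>) y (real m) \<noteq> \<infinity>"
    assume "(\<Sum>k. ennreal (exp (2 * \<beta> * (real (ltime (jchain (?\<Xi> \<omega>) (ww \<alpha> \<beta>) k) y)
               - \<alpha> * real (ltime (jchain (?\<Xi> \<omega>) (ww \<alpha> \<beta>) k) (y - 1)))))) < \<infinity>"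
    then obtain m :: nat where "(\<Sum>k. ennreal (edge_weight \<alpha> \<beta> (?\<Xi> \<omega>) y k)) < of_nat m"
      unfolding edge_weight_def infinity_ennreal_def by (blast dest: ennreal_Ex_less_of_nat)
    then have "Tminus (?\<Xi> \<omega>) (ww \<alpha> \<beta>) y \<le> Tminus_majorant \<alpha> \<beta> (?\<Xi> \<omega>) y (real m)"
      by (intro Tminus_le_majorant) (simp_all add: ennreal_of_nat_eq_real_of_nat)
    with finite show "Tminus (?\<Xi> \<omega>) (ww \<alpha> \<beta>) y < \<infinity>"
      by (simp add: top.not_eq_extremum order.strict_trans1)
  qed
qed

end
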